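(* Let $n\ge1$, $z\in\{1,\dots,n+1\}$, and let $v_{n,z}=(a_1,\dots,a_n)$ with $a_i=z+1-i$ for $i<z$ and $a_i=1$ for $i\ge z$. Then the vector $(T_1(v_{n,z}),\dots,T_n(v_{n,z}))$ defines a Dyck path of length $2(n+1)$.
   Context: A Dyck path of length $2N$ is a word $w$ in the letters $U,D$ with $N$ letters $U$ and $N$ letters $D$ such that every prefix of $w$ contains at least as many $U$'s as $D$'s; $\mathfrak{D}_{2N}$ denotes the set of them. For $G\in\mathfrak{D}_{2(n+1)}$ let $m_i$ be the number of $U$'s preceding the $i$-th $D$ in $G$, and set $v_G=(v_1,\dots,v_n)$ with $v_i=m_i-i+1$. A vector $w\in\mathbb{Z}^n$ defines a Dyck path of length $2(n+1)$ if $w=v_G$ for some $G\in\mathfrak{D}_{2(n+1)}$. For $u=(u_1,\dots,u_m)\in\mathbb{N}^m$ and $1\le i\le m$, $T_i(u)$ is defined as follows: put $r_0=u_i$; as long as there is an index $l\in\{1,\dots,i\}$ with $r_k-u_l>0$, let $l_k$ be the largest such index and set $r_{k+1}=r_k-u_{l_k}$; if the process stops at $r_t$ (with $t\ge0$ steps), then $T_i(u)=r_t+t$. (In particular $T_i(u)=u_i$ if $u_i-u_l\le0$ for all $l\le i$.) For example, for $u=(14,52,4,23,9,2)$ one gets $(T_1(u),\dots,T_6(u))=(14,13,4,8,3,2)$. *)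

theory Defs
  imports Main
begin

datatype step = U | D

definition cnt :: "step \<Rightarrow> step list \<Rightarrow> nat" where
  "cnt s w = length (filter (\<lambda>x. x = s) w)"

definition dyck_paths :: "nat \<Rightarrow> step list set" where
  "dyck_paths N = {w. length w = 2 * N \<and> cnt U w = N \<and> cnt D w = N \<and>
      (\<forall>k \<le> length w. cnt D (take k w) \<le> cnt U (take k w))}"

text \<open>0-based positions of the letters D in w; the i-th D (1-based) is at position
  \<open>D_positions w ! (i - 1)\<close>.\<close>
definition D_positions :: "step list \<Rightarrow> nat list" where
  "D_positions w = filter (\<lambda>j. w ! j = D) [0..<length w]"

definition m_of :: "step list \<Rightarrow> nat \<Rightarrow> nat" where
  "m_of w i = cnt U (take (D_positions w ! (i - 1)) w)"

definition vG :: "nat \<Rightarrow> step list \<Rightarrow> int list" where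
  "vG n G = map (\<lambda>i. int (m_of G i) - int i + 1) [1..<n+1]"

definition defines_dyck :: "nat \<Rightarrow> int list \<Rightarrow> bool" where
  "defines_dyck n w \<longleftrightarrow> (\<exists>G \<in> dyck_paths (n+1). w = vG n G)"

text \<open>The process defining T_i(u) (u as a list, indices 1-based):
  \<open>Tproc u i r res\<close> means that the process started at r stops at some r_t after t steps
  and res = r_t + t.\<close>
inductive Tproc :: "nat list \<Rightarrow> nat \<Rightarrow> nat \<Rightarrow> nat \<Rightarrow> bool" for u i where
  stop: "\<not> (\<exists>l \<in> {1..i}. u ! (l - 1) < r) \<Longrightarrow> Tproc u i r r"
| step: "\<exists>l \<in> {1..i}. u ! (l - 1) < r \<Longrightarrow>
         Tproc u i (r - u ! (Max {l \<in> {1..i}. u ! (l - 1) < r} - 1)) res \<Longrightarrow>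
         Tproc u i r (Suc res)"

definition T :: "nat list \<Rightarrow> nat \<Rightarrow> nat" where
  "T u i = (THE res. Tproc u i (u ! (i - 1)) res)"

definition Tvec :: "nat list \<Rightarrow> nat list" where
  "Tvec u = map (T u) [1..<length u + 1]"

definition vnz :: "nat \<Rightarrow> nat \<Rightarrow> nat list" where
  "vnz n z = map (\<lambda>i. if i < z then z + 1 - i else 1) [1..<n+1]"

end

theory Submission
  imports Defs
begin

text \<open>The vector \<open>v_{n,z} = (z, z-1, ..., 2, 1, ..., 1)\<close> is weakly decreasing, so the
  process defining \<open>T_i\<close> never takes a step and \<open>T\<close> fixes it. And \<open>v_{n,z}\<close> is the vector
  of the path \<open>U^z D^z (UD)^(n+1-z)\<close>: its \<open>i\<close>-th \<open>D\<close> is preceded by \<open>max z i\<close> letters \<open>U\<close>,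
  so \<open>v_i = max z i - i + 1\<close>.\<close>

lemma cnt_Nil [simp]: "cnt s [] = 0"
  by (simp add: cnt_def)

lemma cnt_Cons [simp]: "cnt s (x # w) = (if x = s then 1 else 0) + cnt s w"
  by (simp add: cnt_def)

lemma cnt_append [simp]: "cnt s (v @ w) = cnt s v + cnt s w"
  by (simp add: cnt_def)

lemma cnt_replicate [simp]: "cnt s (replicate k x) = (if x = s then k else 0)"
  by (induction k) auto

lemma Tproc_stop_unique:
  assumes "Tproc u i r res" and "\<not> (\<exists>l \<in> {1..i}. u ! (l - 1) < r)"
  shows "res = r"
  using assms by (cases rule: Tproc.cases) auto

lemma T_eq_nth_if_no_smaller_before:
  assumes "\<forall>l \<in> {1..i}. u ! (i - 1) \<le> u ! (l - 1)"
  shows "T u i = u ! (i - 1)"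
proof -
  have no_step: "\<not> (\<exists>l \<in> {1..i}. u ! (l - 1) < u ! (i - 1))"
    using assms by (auto simp: not_less)
  then have "Tproc u i (u ! (i - 1)) (u ! (i - 1))"
    by (rule Tproc.stop)
  then show ?thesis
    unfolding T_def using Tproc_stop_unique[OF _ no_step] by (rule the_equality)
qed

lemma Tvec_eq_self_if_antimono:
  assumes "sorted_wrt (\<ge>) u"
  shows "Tvec u = u"
proof (rule nth_equalityI)
  show "length (Tvec u) = length u"
    by (simp add: Tvec_def del: upt_Suc)
next
  fix k assume "k < length (Tvec u)"
  then have k: "k < length u"
    by (simp add: Tvec_def del: upt_Suc)
  have "u ! k \<le> u ! (l - 1)" if "l \<in> {1..Suc k}" for l
  proof (cases "l = Suc k")
    case False
    with that have "l - 1 < k" by auto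
    then show ?thesis using sorted_wrt_nth_less[OF assms _ k] by simp
  qed simp
  then have "\<forall>l \<in> {1..Suc k}. u ! k \<le> u ! (l - 1)" ..
  then have "T u (Suc k) = u ! k"
    using T_eq_nth_if_no_smaller_before[of "Suc k" u] by simp
  then show "Tvec u ! k = u ! k"
    using k by (simp add: Tvec_def del: upt_Suc)
qed

lemma vnz_antimono: "sorted_wrt (\<ge>) (vnz n z)"
  unfolding vnz_def sorted_wrt_map by (rule sorted_wrt_mono_rel[OF _ sorted_wrt_upt]) auto

definition balanced :: "step list \<Rightarrow> bool" where
  "balanced w \<longleftrightarrow> (\<forall>k. cnt D (take k w) \<le> cnt U (take k w))"

lemma balanced_append:
  assumes "balanced v" and "cnt D v = cnt U v" and "balanced w"
  shows "balanced (v @ w)"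
  unfolding balanced_def
proof
  fix k
  show "cnt D (take k (v @ w)) \<le> cnt U (take k (v @ w))"
    using assms by (cases "k \<le> length v") (auto simp: balanced_def)
qed

lemma balanced_peak: "balanced (replicate z U @ replicate z D)"
  unfolding balanced_def
proof
  fix k
  show "cnt D (take k (replicate z U @ replicate z D)) \<le> cnt U (take k (replicate z U @ replicate z D))"
    by (cases "k \<le> z") auto
qed

lemma balanced_UD_power: "balanced (concat (replicate k [U, D]))"
proof (induction k)
  case 0
  then show ?case by (simp add: balanced_def)
next
  case (Suc k)
  then show ?case
    using balanced_append[OF balanced_peak[of 1]] by simp
qed

lemma cnt_UD_power [simp]: "cnt s (concat (replicate k [U, D])) = k"
  by (induction k) (cases s; simp)+

lemma length_UD_power [simp]: "length (concat (replicate k [U, D])) = 2 * k"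
  by (induction k) auto

definition peak_path :: "nat \<Rightarrow> nat \<Rightarrow> step list" where
  "peak_path z k = replicate z U @ replicate z D @ concat (replicate k [U, D])"

lemma peak_path_in_dyck_paths: "peak_path z k \<in> dyck_paths (z + k)"
proof -
  have "balanced (peak_path z k)"
    unfolding peak_path_def
    using balanced_append[OF balanced_peak _ balanced_UD_power] by simp
  then show ?thesis
    by (auto simp: dyck_paths_def balanced_def peak_path_def)
qed

lemma D_positions_append:
  "D_positions (v @ w) = D_positions v @ map ((+) (length v)) (D_positions w)"
proof -
  have "map ((+) (length v)) [0..<length w] = [length v..<length v + length w]"
    by (rule nth_equalityI) auto
  then have "[0..<length (v @ w)] = [0..<length v] @ map ((+) (length v)) [0..<length w]"
    by (simp add: upt_add_eq_append[of 0])
  then show ?thesis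
    by (auto simp: D_positions_def filter_map o_def nth_append intro!: filter_cong)
qed

lemma length_D_positions: "length (D_positions w) = cnt D w"
proof (induction w rule: rev_induct)
  case Nil
  then show ?case by (simp add: D_positions_def)
next
  case (snoc x w)
  have "D_positions [x] = (if x = D then [0] else [])"
    by (simp add: D_positions_def)
  then show ?case
    using snoc by (simp add: D_positions_append)
qed

lemma m_of_append_D: "m_of (v @ D # w) (Suc (cnt D v)) = cnt U v"
proof -
  have "D_positions (D # w) = 0 # map Suc (D_positions w)"
    using D_positions_append[of "[D]" w] by (simp add: D_positions_def[of "[D]"])
  then have "D_positions (v @ D # w) ! cnt D v = length v"
    by (simp add: D_positions_append length_D_positions nth_append)
  then show ?thesis
    by (simp add: m_of_def)
qed

lemma m_of_peak_path:
  assumes "1 \<le> i" and "i \<le> z + k"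
  shows "m_of (peak_path z k) i = max z i"
proof (cases "i \<le> z")
  case True
  have "replicate z D = replicate (i - 1) D @ D # replicate (z - i) D"
    using True assms(1) replicate_add[of "i - 1" "Suc (z - i)" D] by simp
  then have "peak_path z k
      = (replicate z U @ replicate (i - 1) D) @ D # replicate (z - i) D @ concat (replicate k [U, D])"
    by (simp add: peak_path_def)
  then show ?thesis
    using m_of_append_D[of "replicate z U @ replicate (i - 1) D"] True assms(1)
    by (simp add: Suc_diff_1)
next
  case False
  define p where "p = replicate z U @ replicate z D @ concat (replicate (i - z - 1) [U, D]) @ [U]"
  have "k = (i - z - 1) + Suc (k + z - i)"
    using False assms(2) by simp
  then have "concat (replicate k [U, D])
      = concat (replicate (i - z - 1) [U, D]) @ [U, D] @ concat (replicate (k + z - i) [U, D])"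
    by (metis replicate_add concat_append replicate_Suc concat.simps(2))
  then have "peak_path z k = p @ D # concat (replicate (k + z - i) [U, D])"
    by (simp add: peak_path_def p_def)
  moreover have "Suc (cnt D p) = i" and "cnt U p = i"
    using False by (simp_all add: p_def)
  ultimately show ?thesis
    using m_of_append_D[of p] False by simp
qed

theorem proposition13:
  fixes n z :: nat
  assumes "n \<ge> 1" and "1 \<le> z" and "z \<le> n + 1"
  shows "defines_dyck n (map int (Tvec (vnz n z)))"
proof -
  define G where "G = peak_path z (n + 1 - z)"
  have "G \<in> dyck_paths (n + 1)"
    using peak_path_in_dyck_paths[of z "n + 1 - z"] assms(3) by (simp add: G_def)
  moreover have "map int (vnz n z) = vG n G"
    using m_of_peak_path[of _ z "n + 1 - z"] assms(3)
    by (auto simp: vnz_def vG_def G_def intro!: map_cong)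
  ultimately show ?thesis
    unfolding defines_dyck_def Tvec_eq_self_if_antimono[OF vnz_antimono] by blast
qed

end
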